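(* Let $\lambda,p_l,p_{l+1},q_m,q_{m+1}\in\mathbb{C}$ be generic and consider the six equations on the cube vertex values $(u_0,u_1,u_2,u_{12},v_0,v_1,v_2,v_{12})$: \[ \mathcal A:\ u_{12}-u_0-\frac{q_{m+1}-p_l}{u_2}+\frac{q_m-p_{l+1}}{u_1}=0,\qquad \mathcal S:\ u_0-v_{12}-\frac{q_m-p_{l+1}}{u_1}+\frac{\lambda-p_l}{v_2}=0, \] \[ \mathcal B:\ (u_0-v_0)\Big(\frac{q_m-p_l}{u_0}+v_2\Big)-q_m+\lambda=0,\qquad \mathcal B':\ (u_1-v_1)\Big(\frac{q_m-p_{l+1}}{u_1}+v_{12}\Big)-q_m+\lambda=0, \] \[ \mathcal C:\ \frac{q_m-p_l}{u_0}-\frac{\lambda-p_l}{v_0}-u_1+v_1=0,\qquad \mathcal C':\ \frac{q_{m+1}-p_l}{u_2}-\frac{\lambda-p_l}{v_2}-u_{12}+v_{12}=0. \] For generic $u_0,u_1,u_2,v_0$, solve $\mathcal A=0$ for $u_{12}$, $\mathcal B=0$ for $v_2$, $\mathcal C=0$ for $v_1$. Then the three expressions for $v_{12}$ obtained from $\mathcal S=0$, $\mathcal B'=0$, $\mathcal C'=0$ coincide as rational functions of $u_0,u_1,u_2,v_0$, and the tetrahedron equations \[ \mathcal K_1:\ \Big(v_{12}+\frac{q_m-p_{l+1}}{u_1}\Big)\Big(\frac{q_m-p_l}{u_0}-\frac{\lambda-p_l}{v_0}\Big)-q_m+\lambda=0,\qquad \mathcal K_2:\ \Big(\frac{\lambda-p_l}{v_2}+u_0\Big)(u_1-v_1)-q_m+\lambda=0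 \] hold identically.
   Context: The non-autonomous dKdV equation is $u_{l+1,m+1}-u_{l,m}=\frac{q_{m+1}-p_l}{u_{l,m+1}}-\frac{q_m-p_{l+1}}{u_{l+1,m}}$ with parameter sequences $p_l,q_m\in\mathbb{C}$. In the cube, $u_0=u_{l,m}$, $u_1=u_{l+1,m}$, $u_2=u_{l,m+1}$, $u_{12}=u_{l+1,m+1}$, and $v_0,v_1,v_2,v_{12}$ are correspondingly placed values of an auxiliary function $v$. Generic means all denominators are nonzero. *)

theory Defs
  imports Complex_Main
begin

text \<open>Parameter naming: lam = lambda, pl = p_l, pl1 = p_(l+1), qm = q_m, qm1 = q_(m+1).\<close>

definition eqA :: "complex \<Rightarrow> complex \<Rightarrow> complex \<Rightarrow> complex \<Rightarrow> complex \<Rightarrow> complex \<Rightarrow> complex \<Rightarrow> complex \<Rightarrow> complex" where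
  "eqA pl pl1 qm qm1 u0 u1 u2 u12 = u12 - u0 - (qm1 - pl) / u2 + (qm - pl1) / u1"

definition eqS :: "complex \<Rightarrow> complex \<Rightarrow> complex \<Rightarrow> complex \<Rightarrow> complex \<Rightarrow> complex \<Rightarrow> complex \<Rightarrow> complex \<Rightarrow> complex" where
  "eqS lam pl pl1 qm u0 u1 v2 v12 = u0 - v12 - (qm - pl1) / u1 + (lam - pl) / v2"

definition eqB :: "complex \<Rightarrow> complex \<Rightarrow> complex \<Rightarrow> complex \<Rightarrow> complex \<Rightarrow> complex \<Rightarrow> complex" where
  "eqB lam pl qm u0 v0 v2 = (u0 - v0) * ((qm - pl) / u0 + v2) - qm + lam"

definition eqB' :: "complex \<Rightarrow> complex \<Rightarrow> complex \<Rightarrow> complex \<Rightarrow> complex \<Rightarrow> complex \<Rightarrow> complex" where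
  "eqB' lam pl1 qm u1 v1 v12 = (u1 - v1) * ((qm - pl1) / u1 + v12) - qm + lam"

definition eqC :: "complex \<Rightarrow> complex \<Rightarrow> complex \<Rightarrow> complex \<Rightarrow> complex \<Rightarrow> complex \<Rightarrow> complex \<Rightarrow> complex" where
  "eqC lam pl qm u0 u1 v0 v1 = (qm - pl) / u0 - (lam - pl) / v0 - u1 + v1"

definition eqC' :: "complex \<Rightarrow> complex \<Rightarrow> complex \<Rightarrow> complex \<Rightarrow> complex \<Rightarrow> complex \<Rightarrow> complex \<Rightarrow> complex" where
  "eqC' lam pl qm1 u2 u12 v2 v12 = (qm1 - pl) / u2 - (lam - pl) / v2 - u12 + v12"

definition eqK1 :: "complex \<Rightarrow> complex \<Rightarrow> complex \<Rightarrow> complex \<Rightarrow> complex \<Rightarrow> complex \<Rightarrow> complex \<Rightarrow> complex \<Rightarrow> complex" where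
  "eqK1 lam pl pl1 qm u0 u1 v0 v12 =
     (v12 + (qm - pl1) / u1) * ((qm - pl) / u0 - (lam - pl) / v0) - qm + lam"

definition eqK2 :: "complex \<Rightarrow> complex \<Rightarrow> complex \<Rightarrow> complex \<Rightarrow> complex \<Rightarrow> complex \<Rightarrow> complex \<Rightarrow> complex" where
  "eqK2 lam pl qm u0 u1 v1 v2 = ((lam - pl) / v2 + u0) * (u1 - v1) - qm + lam"

end

theory Submission
  imports Defs
begin

text \<open>Once \<open>\<A>\<close>, \<open>\<B>\<close>, \<open>\<C>\<close> are solved, the remaining equations are proportional to
  \<open>\<S>\<close>: \<open>\<C>' = -\<S>\<close> by \<open>\<A>\<close>, \<open>\<B>' = -(u\<^sub>1 - v\<^sub>1) \<S>\<close> by \<open>\<K>\<^sub>2\<close>, and \<open>\<K>\<^sub>1 = \<B>'\<close> by \<open>\<C>\<close>.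
  So everything reduces to \<open>\<K>\<^sub>2\<close>, which follows by eliminating \<open>v\<^sub>1\<close> and \<open>v\<^sub>2\<close>: both
  \<open>u\<^sub>1 - v\<^sub>1\<close> and \<open>(\<lambda> - p\<^sub>l)/v\<^sub>2 + u\<^sub>0\<close> are quotients involving
  \<open>N = (q\<^sub>m - p\<^sub>l) v\<^sub>0 - (\<lambda> - p\<^sub>l) u\<^sub>0\<close>, which cancels in their product.\<close>

lemma eqC'_eq_uminus_eqS:
  assumes "eqA pl pl1 qm qm1 u0 u1 u2 u12 = 0"
  shows "eqC' lam pl qm1 u2 u12 v2 v12 = - eqS lam pl pl1 qm u0 u1 v2 v12"
proof -
  have "u12 = u0 + (qm1 - pl) / u2 - (qm - pl1) / u1"
    using assms unfolding eqA_def by (simp add: algebra_simps)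
  then show ?thesis unfolding eqC'_def eqS_def by (simp add: algebra_simps)
qed

lemma eqB'_eq_eqS_if_eqK2:
  assumes "eqK2 lam pl qm u0 u1 v1 v2 = 0"
  shows "eqB' lam pl1 qm u1 v1 v12 = - (u1 - v1) * eqS lam pl pl1 qm u0 u1 v2 v12"
proof -
  have "qm - lam = ((lam - pl) / v2 + u0) * (u1 - v1)"
    using assms unfolding eqK2_def by (simp add: algebra_simps)
  then show ?thesis unfolding eqB'_def eqS_def by algebra
qed

lemma eqK1_eq_eqB'_if_eqC:
  assumes "eqC lam pl qm u0 u1 v0 v1 = 0"
  shows "eqK1 lam pl pl1 qm u0 u1 v0 v12 = eqB' lam pl1 qm u1 v1 v12"
proof -
  have "(qm - pl) / u0 - (lam - pl) / v0 = u1 - v1"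
    using assms unfolding eqC_def by (simp add: algebra_simps)
  then show ?thesis unfolding eqK1_def eqB'_def by (simp add: mult.commute)
qed

lemma eqK2_if_eqB_eqC:
  assumes nz: "u0 \<noteq> 0" "v0 \<noteq> 0" "u0 \<noteq> v0" "u1 \<noteq> v1"
    and B: "eqB lam pl qm u0 v0 v2 = 0"
    and C: "eqC lam pl qm u0 u1 v0 v1 = 0"
  shows "eqK2 lam pl qm u0 u1 v1 v2 = 0"
proof -
  define N where "N = (qm - pl) * v0 - (lam - pl) * u0"
  have u1_v1: "u1 - v1 = N / (u0 * v0)"
    using C nz unfolding eqC_def N_def by (simp add: field_simps)
  with nz have "N \<noteq> 0" by auto
  have "(u0 - v0) * (qm - pl) + (u0 - v0) * u0 * v2 = (qm - lam) * u0"
    using B nz unfolding eqB_def by (simp add: field_simps)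
  then have v2: "v2 = N / (u0 * (u0 - v0))"
    using nz unfolding N_def by (simp add: field_simps)
  have "(lam - pl) / v2 + u0 = u0 * v0 * (qm - lam) / N"
    unfolding v2 using \<open>N \<noteq> 0\<close> nz by (simp add: field_simps N_def)
  then show ?thesis
    unfolding eqK2_def u1_v1 using \<open>N \<noteq> 0\<close> nz by simp
qed

theorem mainTheorem6:
  fixes lam pl pl1 qm qm1 u0 u1 u2 v0 u12 v1 v2 :: complex
  assumes gen: "u0 \<noteq> 0" "u1 \<noteq> 0" "u2 \<noteq> 0" "v0 \<noteq> 0" "u0 \<noteq> v0" "v2 \<noteq> 0" "u1 \<noteq> v1"
    and A: "eqA pl pl1 qm qm1 u0 u1 u2 u12 = 0"
    and B: "eqB lam pl qm u0 v0 v2 = 0"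
    and C: "eqC lam pl qm u0 u1 v0 v1 = 0"
  shows "(\<forall>v12 :: complex.
           (eqS lam pl pl1 qm u0 u1 v2 v12 = 0 \<longleftrightarrow> eqB' lam pl1 qm u1 v1 v12 = 0)
         \<and> (eqS lam pl pl1 qm u0 u1 v2 v12 = 0 \<longleftrightarrow> eqC' lam pl qm1 u2 u12 v2 v12 = 0)
         \<and> (eqS lam pl pl1 qm u0 u1 v2 v12 = 0 \<longrightarrow> eqK1 lam pl pl1 qm u0 u1 v0 v12 = 0))
         \<and> eqK2 lam pl qm u0 u1 v1 v2 = 0"
proof -
  have K2: "eqK2 lam pl qm u0 u1 v1 v2 = 0"
    using eqK2_if_eqB_eqC[OF gen(1,4,5,7) B C] .
  have "u1 - v1 \<noteq> 0" using gen(7) by simp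
  then show ?thesis
    using K2 eqB'_eq_eqS_if_eqK2[OF K2] eqC'_eq_uminus_eqS[OF A] eqK1_eq_eqB'_if_eqC[OF C]
    by auto
qed

end
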